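(* Let $f(t)=e^{-t}/(-\log(1-e^{-t}))$ for $t>0$. Then, as $x\to\infty$, $$\int_0^{x}\log\big(1+(x-t)f(t)\big)\,f(t)\,dt=x\log x-x+O(\log x).$$ *)

theory Defs
  imports "HOL-Analysis.Analysis" "HOL-Library.Landau_Symbols"
begin

definition f8 :: "real \<Rightarrow> real" where
  "f8 t = exp (- t) / (- ln (1 - exp (- t)))"

end

theory Submission
  imports Defs "HOL-Real_Asymp.Real_Asymp"
begin

(* Put L = ln (1 + x). The comparison kernel ln (1 + x - t) has integral (1 + x) L - x over [0, x],
   which is x ln x - x + O(log x). Since -ln (1 - u) lies between u and u / (1 - u), we have
   1 - e^-t <= f(t) <= 1, so the integrand is at most ln (1 + x - t), and, using -g ln g <= 1 - g
   for g = 1 - e^-t, at least ln (1 + x - t) - e^-t (L + 1). The integral of the correction is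
   at most L + 1. *)

lemma ln_one_minus_ge:
  fixes u :: real
  assumes "0 \<le> u" "u < 1"
  shows "- (u / (1 - u)) \<le> ln (1 - u)"
proof -
  have "ln (1 / (1 - u)) \<le> 1 / (1 - u) - 1"
    using assms by (intro ln_le_minus_one) simp
  with assms show ?thesis
    by (simp add: ln_div field_simps)
qed

lemma divide_minus_ln_one_minus_bounds:
  fixes u :: real
  assumes "0 < u" "u < 1"
  shows "1 - u \<le> u / - ln (1 - u)" "u / - ln (1 - u) \<le> 1"
proof -
  have lower: "u \<le> - ln (1 - u)"
    using ln_one_minus_pos_upper_bound[of u] assms by simp
  have upper: "- ln (1 - u) \<le> u / (1 - u)"
    using ln_one_minus_ge[of u] assms by simp
  have pos: "0 < - ln (1 - u)"
    using lower assms by linarith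
  show "u / - ln (1 - u) \<le> 1"
    using lower pos by (metis divide_le_eq_1_pos)
  show "1 - u \<le> u / - ln (1 - u)"
    using upper pos assms by (simp add: field_simps)
qed

lemma f8_ge: "0 \<le> t \<Longrightarrow> 1 - exp (- t) \<le> f8 t"
  using divide_minus_ln_one_minus_bounds(1)[of "exp (- t)"]
  by (cases "t = 0") (simp_all add: f8_def)

lemma f8_le_one: "0 \<le> t \<Longrightarrow> f8 t \<le> 1"
  using divide_minus_ln_one_minus_bounds(2)[of "exp (- t)"]
  by (cases "t = 0") (simp_all add: f8_def)

lemma f8_nonneg:
  assumes "0 \<le> t"
  shows "0 \<le> f8 t"
proof -
  have "exp (- t) \<le> 1"
    using assms by simp
  then show ?thesis
    using f8_ge[OF assms] by linarith
qed

lemma continuous_on_f8: "continuous_on {0..} f8"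
proof -
  have "continuous (at t within {0..}) f8" if "0 \<le> t" for t
  proof (cases "t = 0")
    case True
    \<comment> \<open>HOL's junk value ln 0 = 0 makes f8 0 = 0, which is also the limit at 0+.\<close>
    have "(f8 \<longlongrightarrow> 0) (at_right 0)"
      unfolding f8_def by real_asymp
    then show ?thesis
      using True by (simp add: continuous_within at_within_Ici_at_right f8_def)
  next
    case False
    with that have "0 < 1 - exp (- t)" "ln (1 - exp (- t)) \<noteq> 0"
      by simp_all
    then have "isCont f8 t"
      unfolding f8_def by (intro continuous_intros) auto
    then show ?thesis
      by (rule continuous_at_imp_continuous_within)
  qed
  then show ?thesis
    by (simp add: continuous_on_eq_continuous_within)
qed

lemma weighted_ln_one_plus_le:
  fixes s f :: real
  assumes "0 \<le> s" "0 \<le> f" "f \<le> 1"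
  shows "ln (1 + s * f) * f \<le> ln (1 + s)"
proof -
  have "0 \<le> s * f" "s * f \<le> s"
    using assms by (simp_all add: mult_left_le)
  then have "0 \<le> ln (1 + s * f)" "ln (1 + s * f) \<le> ln (1 + s)"
    by simp_all
  moreover have "ln (1 + s * f) * f \<le> ln (1 + s * f)"
    using assms \<open>0 \<le> ln (1 + s * f)\<close> by (intro mult_left_le)
  ultimately show ?thesis
    by linarith
qed

lemma weighted_ln_one_plus_ge:
  fixes s f g :: real
  assumes "0 \<le> s" "0 \<le> g" "g \<le> f" "f \<le> 1"
  shows "ln (1 + s) - (1 - g) * (ln (1 + s) + 1) \<le> ln (1 + s * f) * f"
proof (cases "g = 0")
  case True
  have "0 \<le> ln (1 + s * f) * f"
    using assms by simp
  then show ?thesis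
    using True by simp
next
  case False
  with assms have g: "0 < g" "g \<le> 1" by simp_all
  have "g - 1 \<le> g * ln g"
    using ln_one_minus_ge[of "1 - g"] g by (simp add: field_simps)
  moreover have "ln (g * (1 + s)) \<le> ln (1 + s * g)"
    using g assms by (intro ln_mono) (simp_all add: algebra_simps add_pos_nonneg)
  then have "g * ln g + g * ln (1 + s) \<le> g * ln (1 + s * g)"
    using g assms by (simp add: ln_mult flip: distrib_left)
  moreover have "ln (1 + s * g) \<le> ln (1 + s * f)"
    using assms g by (intro ln_mono add_left_mono mult_left_mono) (simp_all add: add_pos_nonneg)
  then have "g * ln (1 + s * g) \<le> f * ln (1 + s * f)"
    using assms g by (intro mult_mono) simp_all
  ultimately show ?thesis
    by (simp add: algebra_simps)
qed

lemma has_integral_ln_one_plus_diff: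
  fixes x :: real
  assumes "0 \<le> x"
  shows "((\<lambda>t. ln (1 + (x - t))) has_integral (1 + x) * ln (1 + x) - x) {0..x}"
proof -
  define G where "G t = (1 + x - t) - (1 + x - t) * ln (1 + x - t)" for t
  have "(G has_real_derivative ln (1 + (x - t))) (at t)" if "t \<in> {0..x}" for t
  proof -
    have "0 < 1 + x - t"
      using that by simp
    then show ?thesis
      unfolding G_def
      by (auto intro!: derivative_eq_intros simp: algebra_simps) (simp add: field_simps)
  qed
  then have "((\<lambda>t. ln (1 + (x - t))) has_integral G x - G 0) {0..x}"
    using assms
    by (intro fundamental_theorem_of_calculus)
       (auto simp: has_real_derivative_iff_has_vector_derivative has_vector_derivative_at_within)
  then show ?thesis
    by (simp add: G_def algebra_simps)
qed

lemma has_integral_exp_minus: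
  fixes a b :: real
  assumes "a \<le> b"
  shows "((\<lambda>t. exp (- t)) has_integral exp (- a) - exp (- b)) {a..b}"
proof -
  have "((\<lambda>t. - exp (- t)) has_real_derivative exp (- t)) (at t)" for t :: real
    by (auto intro!: derivative_eq_intros)
  then have "((\<lambda>t. exp (- t)) has_integral - exp (- b) - - exp (- a)) {a..b}"
    using assms
    by (intro fundamental_theorem_of_calculus)
       (auto simp: has_real_derivative_iff_has_vector_derivative has_vector_derivative_at_within)
  then show ?thesis
    by simp
qed

lemma f8_integrand_bounds:
  fixes x t :: real
  assumes "0 \<le> t" "t \<le> x"
  shows "ln (1 + (x - t)) - exp (- t) * (ln (1 + x) + 1) \<le> ln (1 + (x - t) * f8 t) * f8 t"
    and "ln (1 + (x - t) * f8 t) * f8 t \<le> ln (1 + (x - t))"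
proof -
  have s: "0 \<le> x - t" and g: "0 \<le> 1 - exp (- t)"
    using assms by simp_all
  have "1 - (1 - exp (- t)) = exp (- t)"
    by simp
  then have "ln (1 + (x - t)) - exp (- t) * (ln (1 + (x - t)) + 1) \<le> ln (1 + (x - t) * f8 t) * f8 t"
    using weighted_ln_one_plus_ge[OF s g f8_ge[OF assms(1)] f8_le_one[OF assms(1)]] by simp
  moreover have "exp (- t) * (ln (1 + (x - t)) + 1) \<le> exp (- t) * (ln (1 + x) + 1)"
    using assms by (intro mult_left_mono) simp_all
  ultimately show "ln (1 + (x - t)) - exp (- t) * (ln (1 + x) + 1) \<le> ln (1 + (x - t) * f8 t) * f8 t"
    by linarith
  show "ln (1 + (x - t) * f8 t) * f8 t \<le> ln (1 + (x - t))"
    by (rule weighted_ln_one_plus_le[OF s f8_nonneg[OF assms(1)] f8_le_one[OF assms(1)]])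
qed

lemma f8_integral_error_le:
  fixes x :: real
  assumes "0 < x"
  shows "\<bar>integral {0..x} (\<lambda>t. ln (1 + (x - t) * f8 t) * f8 t) - (x * ln x - x)\<bar> \<le> ln (1 + x) + 1"
proof -
  define L where "L = ln (1 + x)"
  define c where "c = (1 - exp (- x)) * (L + 1)"
  define \<phi> where "\<phi> t = ln (1 + (x - t) * f8 t) * f8 t" for t
  define I where "I = integral {0..x} \<phi>"
  have "1 + (x - t) * f8 t \<noteq> 0" if "0 \<le> t" "t \<le> x" for t
  proof -
    have "0 \<le> (x - t) * f8 t"
      using that f8_nonneg[of t] by simp
    then show ?thesis
      by linarith
  qed
  then have "continuous_on {0..x} \<phi>"
    unfolding \<phi>_def by (intro continuous_intros continuous_on_subset[OF continuous_on_f8]) auto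
  then have \<phi>: "(\<phi> has_integral I) {0..x}"
    unfolding I_def by (intro integrable_integral integrable_continuous_interval)
  have \<psi>: "((\<lambda>t. ln (1 + (x - t))) has_integral (1 + x) * L - x) {0..x}"
    unfolding L_def using assms by (intro has_integral_ln_one_plus_diff) simp
  have "((\<lambda>t. exp (- t) * (L + 1)) has_integral c) {0..x}"
    unfolding c_def using assms has_integral_exp_minus[of 0 x]
    by (intro has_integral_mult_left) simp
  from has_integral_diff[OF \<psi> this]
  have "(1 + x) * L - x - c \<le> I"
    by (rule has_integral_le[OF _ \<phi>]) (simp add: \<phi>_def L_def f8_integrand_bounds(1))
  moreover have "I \<le> (1 + x) * L - x"
    by (rule has_integral_le[OF \<phi> \<psi>]) (simp add: \<phi>_def f8_integrand_bounds(2))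
  moreover have "0 \<le> c" "c \<le> L + 1" "0 \<le> L"
    using assms by (simp_all add: c_def L_def mult_left_le_one_le)
  moreover have "0 \<le> x * (L - ln x)" "x * (L - ln x) \<le> 1"
  proof -
    have "ln (1 + 1 / x) = ln ((1 + x) / x)"
      using assms by (simp add: field_simps)
    also have "\<dots> = L - ln x"
      using assms by (simp add: L_def ln_div)
    finally have "L - ln x = ln (1 + 1 / x)"
      by simp
    moreover have "0 \<le> ln (1 + 1 / x)" "ln (1 + 1 / x) \<le> 1 / x"
      using assms by (simp_all add: ln_add_one_self_le_self)
    ultimately show "0 \<le> x * (L - ln x)" "x * (L - ln x) \<le> 1"
      using assms mult_left_mono[of "ln (1 + 1 / x)" "1 / x" x] by simp_all
  qed
  ultimately show ?thesis
    unfolding \<phi>_def[symmetric] I_def[symmetric] L_def[symmetric]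
    by (simp add: abs_le_iff algebra_simps)
qed

theorem mainTheorem8:
  shows "(\<lambda>x::real. integral {0..x} (\<lambda>t. ln (1 + (x - t) * f8 t) * f8 t) - (x * ln x - x))
           \<in> O[at_top](\<lambda>x. ln x)"
proof (rule landau_o.big_trans)
  have "\<forall>\<^sub>F x in at_top. norm (integral {0..x} (\<lambda>t. ln (1 + (x - t) * f8 t) * f8 t) - (x * ln x - x))
          \<le> 1 * norm (ln (1 + x) + 1)"
    using eventually_gt_at_top[of 0] by eventually_elim (use f8_integral_error_le in auto)
  then show "(\<lambda>x. integral {0..x} (\<lambda>t. ln (1 + (x - t) * f8 t) * f8 t) - (x * ln x - x))
               \<in> O[at_top](\<lambda>x. ln (1 + x) + 1)"
    by (rule bigoI)
  show "(\<lambda>x::real. ln (1 + x) + 1) \<in> O[at_top](\<lambda>x. ln x)"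
    by real_asymp
qed

end
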